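(* Let $D=\mathrm{diag}(d_1,\dots,d_n)$ be a complex diagonal matrix and let $X\in\mathbb{C}^{n\times n}$. Then for every $k=1,\dots,n$, \[ \prod_{j=1}^k\sigma_j(X^*DX)\le\prod_{j=1}^k\sigma_j(X^*|D|X), \] where $|D|=\mathrm{diag}(|d_1|,\dots,|d_n|)$.
   Context: For a matrix $Y$, $\sigma_1(Y)\ge\sigma_2(Y)\ge\cdots\ge\sigma_n(Y)$ denote its singular values in nonincreasing order. $X^*$ is the conjugate transpose of $X$, and $|D|=(D^*D)^{1/2}$. *)

theory Defs
  imports "Jordan_Normal_Form.Schur_Decomposition" "HOL-Computational_Algebra.Polynomial"
begin

text \<open>Eigenvalues of a square complex matrix, listed with algebraic multiplicity
  (the order of the list is irrelevant, it is sorted below).\<close>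
definition eigvals :: "complex mat \<Rightarrow> complex list" where
  "eigvals A = (SOME es. length es = dim_row A \<and>
      char_poly A = (\<Prod>e\<leftarrow>es. [:- e, 1:]))"

definition sing_vals :: "complex mat \<Rightarrow> real list" where
  "sing_vals Y = rev (sort (map (\<lambda>e. sqrt (Re e)) (eigvals (mat_adjoint Y * Y))))"

definition sigma :: "nat \<Rightarrow> complex mat \<Rightarrow> real" where
  "sigma j Y = sing_vals Y ! (j - 1)"

end

(* Write D = S U S with S = |D|^(1/2) and U a diagonal unitary matrix, and put B = S X, so that
   X^* D X = B^* U B and X^* |D| X = B^* B.  For M = B^* U B, the squared product of the k largest
   singular values of M is det (V^* M^* M V) for an isometry V onto top eigenvectors of M^* M, and
   with Z = U B V and G = B B^* this is det (Z^* G Z).  By Cauchy-Binet, det (Z^* H Z) is at most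
   the product of the k largest eigenvalues of H times det (Z^* Z) for every positive semidefinite H.
   Applying this to H = G and then, as Z^* Z = V^* P V with P = B^* B, to H = P (which has the same
   eigenvalues as G) bounds the squared product for M by the square of the product for P. *)

theory Submission
  imports Defs "Jordan_Normal_Form.DL_Missing_Sublist"
begin

section \<open>Adjoints and unitary matrices\<close>

lemma dim_row_mat_adjoint[simp]: "dim_row (mat_adjoint A) = dim_col A"
  and dim_col_mat_adjoint[simp]: "dim_col (mat_adjoint A) = dim_row A"
  by (simp_all add: mat_adjoint_def)

lemma index_mat_adjoint[simp]:
  "i < dim_col A \<Longrightarrow> j < dim_row A \<Longrightarrow> mat_adjoint A $$ (i, j) = conjugate (A $$ (j, i))"
  by (simp add: mat_adjoint_def mat_of_rows_def)

lemma mat_adjoint_carrier[simp]: "A \<in> carrier_mat n m \<Longrightarrow> mat_adjoint A \<in> carrier_mat m n"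
  unfolding carrier_mat_def by simp

lemma mat_adjoint_adjoint[simp]: "mat_adjoint (mat_adjoint A) = A"
  by (rule eq_matI) auto

lemma mat_adjoint_mult:
  fixes A B :: "'a :: conjugatable_field mat"
  assumes "A \<in> carrier_mat n m" and "B \<in> carrier_mat m p"
  shows "mat_adjoint (A * B) = mat_adjoint B * mat_adjoint A"
  using assms
  by (intro eq_matI)
    (auto simp: scalar_prod_def sum_conjugate conjugate_dist_mul mult.commute intro!: sum.cong)

lemma mat_adjoint_diag[simp]: "mat_adjoint (mat_diag n f) = mat_diag n (\<lambda>i. conjugate (f i))"
  by (rule eq_matI) (auto simp: mat_diag_def)

lemma conjugate_one[simp]: "conjugate (1 :: 'a :: conjugatable_field) = 1"
proof -
  have "conjugate (1 :: 'a) = conjugate 1 * conjugate (conjugate 1)" by simp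
  also have "\<dots> = conjugate (1 * conjugate 1)" by (simp only: conjugate_dist_mul)
  finally show ?thesis by simp
qed

lemma mat_adjoint_one[simp]: "mat_adjoint (1\<^sub>m n :: 'a :: conjugatable_field mat) = 1\<^sub>m n"
  by (rule eq_matI) auto

lemma mat_adjoint_gram:
  fixes A :: "'a :: conjugatable_field mat"
  assumes "A \<in> carrier_mat m n"
  shows "mat_adjoint (mat_adjoint A * A) = mat_adjoint A * A"
  using mat_adjoint_mult[OF mat_adjoint_carrier[OF assms] assms] by simp

lemma det_mat_adjoint:
  fixes A :: "complex mat"
  assumes "A \<in> carrier_mat n n"
  shows "det (mat_adjoint A) = cnj (det A)"
proof -
  interpret cnj: comm_ring_hom cnj by unfold_locales auto
  have "mat_adjoint A = map_mat cnj (transpose_mat A)"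
    using assms by (intro eq_matI) auto
  then show ?thesis using det_transpose[OF assms] by simp
qed

lemma index_mult_mat_sum:
  assumes "A \<in> carrier_mat nr n" and "B \<in> carrier_mat n nc" and "i < nr" and "j < nc"
  shows "(A * B) $$ (i, j) = (\<Sum>l<n. A $$ (i, l) * B $$ (l, j))"
  using assms by (auto simp: scalar_prod_def atLeast0LessThan intro!: sum.cong)

lemma compression_unitary_conj:
  fixes U Z :: "complex mat"
  assumes U: "U \<in> carrier_mat n n" and Z: "Z \<in> carrier_mat n k" and L: "L \<in> carrier_mat n n"
  shows "mat_adjoint Z * (U * L * mat_adjoint U) * Z = mat_adjoint (mat_adjoint U * Z) * L * (mat_adjoint U * Z)"
proof -
  note [simp] = assoc_mult_mat[of _ k n _ n _ n] assoc_mult_mat[of _ k n _ n _ k]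
    assoc_mult_mat[of _ n n _ n _ k] assoc_mult_mat[of _ n n _ n _ n]
    mult_carrier_mat[of _ k n _ n] mult_carrier_mat[of _ n n _ n] mult_carrier_mat[of _ n n _ k]
  have "mat_adjoint (mat_adjoint U * Z) = mat_adjoint Z * U"
    using mat_adjoint_mult[OF mat_adjoint_carrier[OF U] Z] by simp
  then show ?thesis using U Z L by simp
qed

lemma unitary_right_inverse:
  fixes U :: "'a :: conjugatable_field mat"
  assumes "U \<in> carrier_mat n n" and "mat_adjoint U * U = 1\<^sub>m n"
  shows "U * mat_adjoint U = 1\<^sub>m n"
  using mat_mult_left_right_inverse[OF mat_adjoint_carrier[OF assms(1)] assms] .

lemma cscalar_prod_self: "w \<bullet>c w = complex_of_real (\<Sum>l<dim_vec w. (cmod (w $ l))\<^sup>2)"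
proof -
  have "w \<bullet>c w = (\<Sum>l<dim_vec w. w $ l * cnj (w $ l))"
    by (simp add: scalar_prod_def atLeast0LessThan)
  also have "\<dots> = (\<Sum>l<dim_vec w. complex_of_real ((cmod (w $ l))\<^sup>2))"
    by (simp only: complex_norm_square)
  finally show ?thesis by simp
qed

lemma unitary_mat_normalize_corthogonal:
  fixes ws :: "complex vec list"
  assumes ws: "set ws \<subseteq> carrier_vec n" "corthogonal ws" "length ws = n"
  defines "W \<equiv> mat n n (\<lambda>(i, j). ws ! j $ i / complex_of_real (sqrt (\<Sum>l<n. (cmod (ws ! j $ l))\<^sup>2)))"
  shows "mat_adjoint W * W = 1\<^sub>m n"
proof (rule eq_matI)
  define r where "r j = (\<Sum>l<n. (cmod (ws ! j $ l))\<^sup>2)" for j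
  have wsc: "i < n \<Longrightarrow> ws ! i \<in> carrier_vec n" for i using ws by auto
  have r: "ws ! i \<bullet>c ws ! i = complex_of_real (r i)" if "i < n" for i
    using cscalar_prod_self[of "ws ! i"] wsc[OF that] unfolding r_def by simp
  have r_pos: "0 < r i" if "i < n" for i
  proof -
    have "ws ! i \<bullet>c ws ! i \<noteq> 0" using ws(2,3) that unfolding corthogonal_def by auto
    then have "r i \<noteq> 0" using r[OF that] by auto
    moreover have "0 \<le> r i" unfolding r_def by (intro sum_nonneg) auto
    ultimately show ?thesis by simp
  qed
  have Wc: "W \<in> carrier_mat n n" by (simp add: W_def)
  fix i j assume "i < dim_row (1\<^sub>m n :: complex mat)" "j < dim_col (1\<^sub>m n :: complex mat)"
  then have i: "i < n" and j: "j < n" by auto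
  have "(mat_adjoint W * W) $$ (i, j)
      = (\<Sum>l<n. ws ! j $ l * cnj (ws ! i $ l)) / complex_of_real (sqrt (r i) * sqrt (r j))"
    using i j unfolding index_mult_mat_sum[OF mat_adjoint_carrier[OF Wc] Wc i j]
    by (simp add: W_def r_def sum_divide_distrib ac_simps)
  also have "\<dots> = (ws ! j \<bullet>c ws ! i) / complex_of_real (sqrt (r i) * sqrt (r j))"
    using wsc[OF i] wsc[OF j] by (simp add: scalar_prod_def atLeast0LessThan)
  also have "\<dots> = 1\<^sub>m n $$ (i, j)"
  proof (cases "i = j")
    case True
    have "sqrt (r i) * sqrt (r i) = r i" using r_pos[OF i] by simp
    then show ?thesis using True i r[OF i] r_pos[OF i] by simp
  next
    case False
    then have "ws ! j \<bullet>c ws ! i = 0" using ws(2,3) i j unfolding corthogonal_def by auto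
    then show ?thesis using False i j by simp
  qed
  finally show "(mat_adjoint W * W) $$ (i, j) = 1\<^sub>m n $$ (i, j)" .
qed (auto simp: W_def)

lemma unitary_mat_first_col:
  fixes v :: "complex vec"
  assumes v: "v \<in> carrier_vec n" and v0: "v \<noteq> 0\<^sub>v n"
  obtains W c where "W \<in> carrier_mat n n" and "mat_adjoint W * W = 1\<^sub>m n" and "col W 0 = c \<cdot>\<^sub>v v"
proof -
  interpret cof_vec_space n "TYPE(complex)" .
  define b where "b = basis_completion v"
  define ws where "ws = gram_schmidt n b"
  from basis_completion[OF v v0, folded b_def]
  have b: "distinct b" "\<not> lin_dep (set b)" "set b \<subseteq> carrier_vec n" "hd b = v" "length b = n"
    by auto
  have n: "n \<noteq> 0" using v v0 by auto
  from gram_schmidt_result[OF b(3,1,2) refl, folded ws_def]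
  have ws: "set ws \<subseteq> carrier_vec n" "corthogonal ws" "length ws = n" by (auto simp: b(5))
  have ws0: "ws ! 0 = v"
    using gram_schmidt_hd[OF v, of "tl b"] b(4,5) n ws(3)
    by (metis hd_Cons_tl hd_conv_nth list.size(3) ws_def)
  define r where "r j = (\<Sum>l<n. (cmod (ws ! j $ l))\<^sup>2)" for j
  define W where "W = mat n n (\<lambda>(i, j). ws ! j $ i / complex_of_real (sqrt (r j)))"
  have "W \<in> carrier_mat n n" by (simp add: W_def)
  moreover have "mat_adjoint W * W = 1\<^sub>m n"
    using unitary_mat_normalize_corthogonal[OF ws] unfolding W_def r_def .
  moreover have "col W 0 = complex_of_real (1 / sqrt (r 0)) \<cdot>\<^sub>v v"
    using n v ws0 unfolding W_def by (intro eq_vecI) auto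
  ultimately show ?thesis using that by blast
qed

section \<open>The Cauchy--Binet formula\<close>

lemma pick_image:
  assumes "finite S"
  shows "pick S ` {0..<card S} = S"
proof
  show "pick S ` {0..<card S} \<subseteq> S" using pick_in_set by auto
  show "S \<subseteq> pick S ` {0..<card S}"
  proof
    fix x assume x: "x \<in> S"
    have "card {a\<in>S. a < x} < card S"
      using assms x by (intro psubset_card_mono) auto
    then show "x \<in> pick S ` {0..<card S}"
      using pick_card_in_set[OF x] by force
  qed
qed

lemma inj_on_pick: "inj_on (pick S) {0..<card S}"
  by (rule inj_onI) (metis atLeastLessThan_iff linorder_neqE_nat less_irrefl pick_mono)

lemma prod_pick:
  assumes "finite S"
  shows "(\<Prod>i\<in>S. f i) = (\<Prod>j<card S. f (pick S j))"
  using prod.reindex[OF inj_on_pick, of f S] pick_image[OF assms]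
  by (simp add: atLeast0LessThan)

lemma le_pick: "j < card S \<Longrightarrow> j \<le> pick S j"
proof (induction j)
  case (Suc j)
  then show ?case using pick_mono[of "Suc j" S j] by auto
qed simp

definition col_submat :: "'a mat \<Rightarrow> nat set \<Rightarrow> 'a mat" where
  "col_submat A S = mat (dim_row A) (card S) (\<lambda>(i, j). A $$ (i, pick S j))"

definition row_submat :: "'a mat \<Rightarrow> nat set \<Rightarrow> 'a mat" where
  "row_submat B S = mat (card S) (dim_col B) (\<lambda>(i, j). B $$ (pick S i, j))"

lemma col_submat_carrier[simp]: "col_submat A S \<in> carrier_mat (dim_row A) (card S)"
  unfolding col_submat_def by simp

lemma row_submat_carrier[simp]: "row_submat B S \<in> carrier_mat (card S) (dim_col B)"
  unfolding row_submat_def by simp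

lemma col_submat_mat_adjoint:
  assumes "S \<subseteq> {0..<dim_row B}"
  shows "col_submat (mat_adjoint B) S = mat_adjoint (row_submat B S)"
proof -
  have "j < card S \<Longrightarrow> pick S j < dim_row B" for j
    using pick_in_set[of j S] assms by auto
  then show ?thesis unfolding col_submat_def row_submat_def by (intro eq_matI) auto
qed

lemma col_submat_mult_diag:
  assumes "A \<in> carrier_mat m n" and "S \<subseteq> {0..<n}"
  shows "col_submat (A * mat_diag n f) S = col_submat A S * mat_diag (card S) (\<lambda>j. f (pick S j))"
proof -
  have "j < card S \<Longrightarrow> pick S j < n" for j using pick_in_set[of j S] assms(2) by auto
  moreover have "col_submat A S * mat_diag (card S) (\<lambda>j. f (pick S j))
      = mat m (card S) (\<lambda>(i, j). col_submat A S $$ (i, j) * f (pick S j))"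
    using mat_diag_mult_right[OF col_submat_carrier] assms(1) by auto
  moreover have "A * mat_diag n f = mat m n (\<lambda>(i, j). A $$ (i, j) * f j)"
    by (rule mat_diag_mult_right[OF assms(1)])
  ultimately show ?thesis
    using assms(1) by (intro eq_matI) (auto simp: col_submat_def)
qed

lemma rank_permutes:
  fixes f :: "nat \<Rightarrow> nat"
  assumes f: "inj_on f {0..<k}"
  shows "(\<lambda>i. if i < k then card {a \<in> f ` {0..<k}. a < f i} else i) permutes {0..<k}"
    (is "?rank permutes _")
proof (rule inj_on_nat_permutes)
  let ?S = "f ` {0..<k}"
  have card: "card ?S = k" using card_image[OF f] by simp
  show "?rank \<in> {0..<k} \<rightarrow> {0..<k}"
  proof
    fix i assume i: "i \<in> {0..<k}"
    then have "card {a \<in> ?S. a < f i} < card ?S" by (intro psubset_card_mono) auto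
    then show "?rank i \<in> {0..<k}" using i card by auto
  qed
  show "inj_on ?rank {0..<k}"
  proof (rule inj_onI)
    fix i j assume ij: "i \<in> {0..<k}" "j \<in> {0..<k}" "?rank i = ?rank j"
    then have "pick ?S (?rank i) = pick ?S (?rank j)" by simp
    then have "f i = f j" using ij(1,2) by (simp add: pick_card_in_set)
    then show "i = j" using inj_onD[OF f] ij(1,2) by blast
  qed
qed auto

lemma bij_betw_pick_permutes:
  "bij_betw (\<lambda>(S, p) i. if i < k then pick S (p i) else i)
     (SIGMA S:{S. S \<subseteq> {0..<n} \<and> card S = k}. {p. p permutes {0..<k}})
     {f. (\<forall>i\<in>{0..<k}. f i \<in> {0..<n}) \<and> (\<forall>i. i \<notin> {0..<k} \<longrightarrow> f i = i) \<and> inj_on f {0..<k}}"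
    (is "bij_betw ?phi ?T ?I")
proof (rule bij_betw_byWitness)
  let ?rank = "\<lambda>f i. if i < k then card {a \<in> f ` {0..<k}. a < f i} else i"
  let ?psi = "\<lambda>f. (f ` {0..<k}, ?rank f)"
  show "\<forall>f\<in>?I. ?phi (?psi f) = f"
    by (auto simp: pick_card_in_set)
  show "\<forall>Sp\<in>?T. ?psi (?phi Sp) = Sp" and "?phi ` ?T \<subseteq> ?I"
  proof -
    have "?psi (?phi Sp) = Sp \<and> ?phi Sp \<in> ?I" if "Sp \<in> ?T" for Sp
    proof -
      obtain S p where Sp: "Sp = (S, p)" and S: "S \<subseteq> {0..<n}" "card S = k"
        and p: "p permutes {0..<k}" using \<open>Sp \<in> ?T\<close> by auto
      let ?f = "\<lambda>i. if i < k then pick S (p i) else i"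
      have fin: "finite S" using S(1) finite_subset by blast
      have pk: "i < k \<Longrightarrow> p i < k" for i using permutes_in_image[OF p] by auto
      have img: "?f ` {0..<k} = S"
        using pick_image[OF fin] permutes_image[OF p] S(2) by (force simp: image_image[symmetric])
      have "?rank ?f = p"
        using img card_pick[of "p _" S] pk permutes_not_in[OF p] S(2) by (auto intro!: ext)
      moreover have "?f \<in> ?I"
      proof -
        have "i < k \<Longrightarrow> pick S (p i) < n" for i using pick_in_set[of "p i" S] pk S by auto
        moreover have "inj_on ?f {0..<k}"
        proof (rule inj_onI)
          fix i j assume ij: "i \<in> {0..<k}" "j \<in> {0..<k}" "?f i = ?f j"
          then have "p i = p j" using inj_onD[OF inj_on_pick, of S "p i" "p j"] pk S(2) by auto
          then show "i = j" using permutes_inj[OF p] by (auto dest: injD)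
        qed
        ultimately show ?thesis by auto
      qed
      ultimately show ?thesis unfolding Sp prod.case using img by simp
    qed
    then show "\<forall>Sp\<in>?T. ?psi (?phi Sp) = Sp" and "?phi ` ?T \<subseteq> ?I" by auto
  qed
  show "?psi ` ?I \<subseteq> ?T"
  proof (rule image_subsetI)
    fix f assume "f \<in> ?I"
    then have f: "\<forall>i\<in>{0..<k}. f i \<in> {0..<n}" "inj_on f {0..<k}" by auto
    let ?S = "f ` {0..<k}"
    have card: "card ?S = k" using card_image[OF f(2)] by simp
    have "?rank f permutes {0..<k}" by (rule rank_permutes[OF f(2)])
    then show "?psi f \<in> ?T" using f(1) card by auto
  qed
qed

lemma det_rows_pick_permutes:
  fixes A B :: "'a :: comm_ring_1 mat"
  assumes A: "A \<in> carrier_mat k n" and B: "B \<in> carrier_mat n k"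
    and S: "S \<subseteq> {0..<n}" "card S = k" and p: "p permutes {0..<k}"
  shows "det (mat\<^sub>r k k (\<lambda>i. A $$ (i, pick S (p i)) \<cdot>\<^sub>v row B (pick S (p i))))
       = det (row_submat B S) * (signof p * (\<Prod>i\<in>{0..<k}. col_submat A S $$ (i, p i)))"
proof -
  have pk: "i < k \<Longrightarrow> p i < k" for i using permutes_in_image[OF p] by auto
  have pn: "i < k \<Longrightarrow> pick S (p i) < n" for i using pick_in_set[of "p i" S] pk S by auto
  have "det (mat\<^sub>r k k (\<lambda>i. A $$ (i, pick S (p i)) \<cdot>\<^sub>v row B (pick S (p i))))
      = (\<Prod>i\<in>{0..<k}. A $$ (i, pick S (p i))) * det (mat\<^sub>r k k (\<lambda>i. row B (pick S (p i))))"
    using B by (intro det_rows_mul) auto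
  also have "mat\<^sub>r k k (\<lambda>i. row B (pick S (p i))) = mat k k (\<lambda>(i, j). row_submat B S $$ (p i, j))"
    using B S pk pn by (intro eq_matI) (auto simp: row_submat_def)
  also have "det \<dots> = signof p * det (row_submat B S)"
  proof -
    have "row_submat B S \<in> carrier_mat k k" using row_submat_carrier[of B S] B S by simp
    then show ?thesis by (rule det_permute_rows[OF _ p])
  qed
  also have "(\<Prod>i\<in>{0..<k}. A $$ (i, pick S (p i))) = (\<Prod>i\<in>{0..<k}. col_submat A S $$ (i, p i))"
    using A S pk by (intro prod.cong) (auto simp: col_submat_def)
  finally show ?thesis by (simp add: ac_simps)
qed

lemma det_rows_not_inj_on:
  fixes A B :: "'a :: comm_ring_1 mat"
  assumes B: "B \<in> carrier_mat n k" and ij: "f i = f j" "i \<noteq> j" "i < k" "j < k"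
  shows "det (mat\<^sub>r k k (\<lambda>i. A $$ (i, f i) \<cdot>\<^sub>v row B (f i))) = 0"
proof -
  have "det (mat\<^sub>r k k (\<lambda>i. A $$ (i, f i) \<cdot>\<^sub>v row B (f i)))
      = (\<Prod>i\<in>{0..<k}. A $$ (i, f i)) * det (mat\<^sub>r k k (\<lambda>i. row B (f i)))"
    using B by (intro det_rows_mul) auto
  also have "det (mat\<^sub>r k k (\<lambda>i. row B (f i))) = 0"
    using ij by (intro det_identical_rows[OF _ ij(2-4)]) auto
  finally show ?thesis by simp
qed

theorem cauchy_binet:
  fixes A B :: "'a :: comm_ring_1 mat"
  assumes A: "A \<in> carrier_mat k n" and B: "B \<in> carrier_mat n k"
  shows "det (A * B) = (\<Sum>S | S \<subseteq> {0..<n} \<and> card S = k. det (col_submat A S) * det (row_submat B S))"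
proof -
  let ?g = "\<lambda>f. det (mat\<^sub>r k k (\<lambda>i. A $$ (i, f i) \<cdot>\<^sub>v row B (f i)))"
  let ?F = "{f. (\<forall>i\<in>{0..<k}. f i \<in> {0..<n}) \<and> (\<forall>i. i \<notin> {0..<k} \<longrightarrow> f i = i)}"
  let ?I = "{f. (\<forall>i\<in>{0..<k}. f i \<in> {0..<n}) \<and> (\<forall>i. i \<notin> {0..<k} \<longrightarrow> f i = i) \<and> inj_on f {0..<k}}"
  let ?Sk = "{S. S \<subseteq> {0..<n} \<and> card S = k}"
  let ?P = "{p. p permutes {0..<k}}"
  let ?phi = "\<lambda>(S, p) i. if i < k then pick S (p i) else i"
  have "det (A * B) = sum ?g ?F"
    unfolding mat_mul_finsum_alt[OF A B] using A B by (intro det_linear_rows_sum) auto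
  also have "\<dots> = sum ?g ?I"
  proof (rule sum.mono_neutral_right)
    show "finite ?F" by (rule finite_bounded_functions) auto
    show "\<forall>f\<in>?F - ?I. ?g f = 0"
    proof
      fix f assume "f \<in> ?F - ?I"
      then obtain i j where "f i = f j" "i \<noteq> j" "i < k" "j < k" unfolding inj_on_def by auto
      then show "?g f = 0" by (rule det_rows_not_inj_on[OF B])
    qed
  qed auto
  also have "\<dots> = (\<Sum>Sp\<in>Sigma ?Sk (\<lambda>_. ?P). ?g (?phi Sp))"
    by (rule sum.reindex_bij_betw[OF bij_betw_pick_permutes[of k n], symmetric])
  also have "\<dots> = (\<Sum>S\<in>?Sk. \<Sum>p\<in>?P. ?g (?phi (S, p)))"
    by (subst sum.Sigma)
      (auto intro!: sum.cong finite_subset[of _ "Pow {0..<n}"] simp: finite_permutations)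
  also have "\<dots> = (\<Sum>S\<in>?Sk. det (col_submat A S) * det (row_submat B S))"
  proof (rule sum.cong[OF refl])
    fix S assume S: "S \<in> ?Sk"
    have "mat\<^sub>r k k (\<lambda>i. A $$ (i, ?phi (S, p) i) \<cdot>\<^sub>v row B (?phi (S, p) i))
        = mat\<^sub>r k k (\<lambda>i. A $$ (i, pick S (p i)) \<cdot>\<^sub>v row B (pick S (p i)))" for p
      by (rule eq_rowI) auto
    then have "(\<Sum>p\<in>?P. ?g (?phi (S, p)))
        = det (row_submat B S) * (\<Sum>p\<in>?P. signof p * (\<Prod>i\<in>{0..<k}. col_submat A S $$ (i, p i)))"
      using det_rows_pick_permutes[OF A B] S by (simp add: sum_distrib_left)
    also have "\<dots> = det (row_submat B S) * det (col_submat A S)"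
      using det_def'[of "col_submat A S" k] col_submat_carrier[of A S] A S by simp
    finally show "(\<Sum>p\<in>?P. ?g (?phi (S, p))) = det (col_submat A S) * det (row_submat B S)"
      by simp
  qed
  finally show ?thesis by simp
qed

section \<open>Spectral theorem for Hermitian matrices\<close>

definition spectral_decomposition :: "nat \<Rightarrow> complex mat \<Rightarrow> (nat \<Rightarrow> real) \<Rightarrow> complex mat \<Rightarrow> bool"
  where "spectral_decomposition n U lam A \<longleftrightarrow> U \<in> carrier_mat n n \<and> mat_adjoint U * U = 1\<^sub>m n \<and>
    A = U * mat_diag n (\<lambda>i. complex_of_real (lam i)) * mat_adjoint U"

lemma mat_adjoint_block_diag:
  fixes A D :: "'a :: conjugatable_field mat"
  assumes "A \<in> carrier_mat n1 n1" and "D \<in> carrier_mat n2 n2"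
  shows "mat_adjoint (four_block_mat A (0\<^sub>m n1 n2) (0\<^sub>m n2 n1) D)
       = four_block_mat (mat_adjoint A) (0\<^sub>m n1 n2) (0\<^sub>m n2 n1) (mat_adjoint D)"
  using assms by (intro eq_matI) auto

lemma mult_block_diag:
  fixes A1 A2 D1 D2 :: "'a :: semiring_0 mat"
  assumes "A1 \<in> carrier_mat n1 n1" "A2 \<in> carrier_mat n1 n1"
    and "D1 \<in> carrier_mat n2 n2" "D2 \<in> carrier_mat n2 n2"
  shows "four_block_mat A1 (0\<^sub>m n1 n2) (0\<^sub>m n2 n1) D1 * four_block_mat A2 (0\<^sub>m n1 n2) (0\<^sub>m n2 n1) D2
       = four_block_mat (A1 * A2) (0\<^sub>m n1 n2) (0\<^sub>m n2 n1) (D1 * D2)"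
  using assms by (subst mult_four_block_mat) auto

lemma mat_diag_block_diag:
  "mat_diag (n1 + n2) f = four_block_mat (mat_diag n1 f) (0\<^sub>m n1 n2) (0\<^sub>m n2 n1) (mat_diag n2 (\<lambda>i. f (n1 + i)))"
  by (intro eq_matI) (auto simp: mat_diag_def)

lemma spectral_decomposition_block_diag:
  assumes "spectral_decomposition n1 U1 lam1 A1" and "spectral_decomposition n2 U2 lam2 A2"
  shows "spectral_decomposition (n1 + n2) (four_block_mat U1 (0\<^sub>m n1 n2) (0\<^sub>m n2 n1) U2)
      (\<lambda>i. if i < n1 then lam1 i else lam2 (i - n1)) (four_block_mat A1 (0\<^sub>m n1 n2) (0\<^sub>m n2 n1) A2)"
proof -
  let ?L = "\<lambda>n lam. mat_diag n (\<lambda>i. complex_of_real (lam i))"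
  have U1: "U1 \<in> carrier_mat n1 n1" "mat_adjoint U1 * U1 = 1\<^sub>m n1" "A1 = U1 * ?L n1 lam1 * mat_adjoint U1"
    and U2: "U2 \<in> carrier_mat n2 n2" "mat_adjoint U2 * U2 = 1\<^sub>m n2" "A2 = U2 * ?L n2 lam2 * mat_adjoint U2"
    using assms unfolding spectral_decomposition_def by auto
  have L: "?L (n1 + n2) (\<lambda>i. if i < n1 then lam1 i else lam2 (i - n1))
      = four_block_mat (?L n1 lam1) (0\<^sub>m n1 n2) (0\<^sub>m n2 n1) (?L n2 lam2)"
    unfolding mat_diag_block_diag by (auto intro!: cong_four_block_mat eq_matI simp: mat_diag_def)
  show ?thesis
    unfolding spectral_decomposition_def L
    using U1 U2 by (simp add: mat_adjoint_block_diag mult_block_diag)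
qed

lemma spectral_decomposition_scalar:
  "spectral_decomposition 1 (1\<^sub>m 1) (\<lambda>_. r) (mat 1 1 (\<lambda>_. complex_of_real r))"
  unfolding spectral_decomposition_def
  by (auto intro!: eq_matI simp: mat_diag_def scalar_prod_def)

lemma spectral_decomposition_unitary_conj:
  assumes W: "W \<in> carrier_mat n n" "mat_adjoint W * W = 1\<^sub>m n" and A: "A \<in> carrier_mat n n"
    and "spectral_decomposition n U lam (mat_adjoint W * A * W)"
  shows "spectral_decomposition n (W * U) lam A"
proof -
  let ?L = "mat_diag n (\<lambda>i. complex_of_real (lam i))"
  note [simp] = assoc_mult_mat[of _ n n _ n _ n] mult_carrier_mat[of _ n n _ n]
  have U: "U \<in> carrier_mat n n" "mat_adjoint U * U = 1\<^sub>m n"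
    and WAW: "mat_adjoint W * A * W = U * ?L * mat_adjoint U"
    using assms(4) unfolding spectral_decomposition_def by auto
  have WW: "W * mat_adjoint W = 1\<^sub>m n" by (rule unitary_right_inverse[OF W])
  have adj: "mat_adjoint (W * U) = mat_adjoint U * mat_adjoint W"
    by (rule mat_adjoint_mult[OF W(1) U(1)])
  have "mat_adjoint (W * U) * (W * U) = mat_adjoint U * (mat_adjoint W * W) * U"
    unfolding adj using W(1) U(1) by simp
  also have "\<dots> = mat_adjoint U * U" unfolding W(2) using U by simp
  also have "\<dots> = 1\<^sub>m n" by (rule U(2))
  finally have unitary: "mat_adjoint (W * U) * (W * U) = 1\<^sub>m n" .
  have "A = (W * mat_adjoint W) * A * (W * mat_adjoint W)"
    unfolding WW using A by simp
  also have "\<dots> = W * (mat_adjoint W * A * W) * mat_adjoint W"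
    using W(1) A by simp
  also have "\<dots> = W * U * ?L * mat_adjoint (W * U)"
    unfolding WAW adj using W U by simp
  finally show ?thesis
    unfolding spectral_decomposition_def using W U unitary by auto
qed

lemma first_col_unitary_conj_eigenvector:
  fixes A W :: "complex mat"
  assumes A: "A \<in> carrier_mat n n" and W: "W \<in> carrier_mat n n" "mat_adjoint W * W = 1\<^sub>m n"
    and v: "v \<in> carrier_vec n" "A *\<^sub>v v = e \<cdot>\<^sub>v v" and W0: "col W 0 = c \<cdot>\<^sub>v v" and i: "i < n"
  shows "(mat_adjoint W * A * W) $$ (i, 0) = (if i = 0 then e else 0)"
proof -
  have n: "0 < n" using i by simp
  have "col (A * W) 0 = A *\<^sub>v col W 0" by (rule col_mult2[OF A W(1) n])
  also have "\<dots> = e \<cdot>\<^sub>v col W 0"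
    unfolding W0 using A v by (simp add: mult_mat_vec smult_smult_assoc mult.commute)
  finally have colAW: "col (A * W) 0 = e \<cdot>\<^sub>v col W 0" .
  have "(mat_adjoint W * A * W) $$ (i, 0) = row (mat_adjoint W) i \<bullet> col (A * W) 0"
    using A W i n by (simp add: assoc_mult_mat[of _ n n _ n _ n])
  also have "\<dots> = e * (row (mat_adjoint W) i \<bullet> col W 0)"
    unfolding colAW using W i n by simp
  also have "row (mat_adjoint W) i \<bullet> col W 0 = (mat_adjoint W * W) $$ (i, 0)"
    using W(1) i n by simp
  finally show ?thesis unfolding W(2) using i by simp
qed

lemma hermitian_first_col_block:
  fixes A :: "complex mat"
  assumes A: "A \<in> carrier_mat (Suc m) (Suc m)" "mat_adjoint A = A"
    and col0: "\<And>i. i < Suc m \<Longrightarrow> A $$ (i, 0) = (if i = 0 then e else 0)"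
  obtains A' where "A' \<in> carrier_mat m m" and "mat_adjoint A' = A'"
    and "A = four_block_mat (mat 1 1 (\<lambda>_. complex_of_real (Re e))) (0\<^sub>m 1 m) (0\<^sub>m m 1) A'"
proof -
  have adj: "A $$ (j, i) = cnj (A $$ (i, j))" if "i < Suc m" "j < Suc m" for i j
    using arg_cong[OF A(2), of "\<lambda>B. B $$ (j, i)"] A(1) that by simp
  have row0: "A $$ (0, j) = (if j = 0 then cnj e else 0)" if "j < Suc m" for j
    using adj[OF that, of 0] col0[OF that] by simp
  have cnj_e: "cnj e = e" using row0[of 0] col0[of 0] by simp
  then have e: "complex_of_real (Re e) = e" by (simp add: complex_eq_iff)
  define A' where "A' = mat m m (\<lambda>(i, j). A $$ (Suc i, Suc j))"
  have "A' \<in> carrier_mat m m" by (simp add: A'_def)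
  moreover have "mat_adjoint A' = A'"
  proof (rule eq_matI)
    fix i j assume "i < dim_row A'" "j < dim_col A'"
    then have "i < m" "j < m" by (auto simp: A'_def)
    then show "mat_adjoint A' $$ (i, j) = A' $$ (i, j)"
      using adj[of "Suc j" "Suc i"] by (simp add: A'_def)
  qed (auto simp: A'_def)
  moreover have "A = four_block_mat (mat 1 1 (\<lambda>_. complex_of_real (Re e))) (0\<^sub>m 1 m) (0\<^sub>m m 1) A'"
    using A(1) col0 row0 e cnj_e by (intro eq_matI) (auto simp: A'_def)
  ultimately show ?thesis using that by blast
qed

text \<open>Deflation: conjugating by a unitary matrix whose first column is an eigenvector splits off
  a 1 \<times> 1 block.\<close>

theorem hermitian_spectral_decomposition:
  fixes A :: "complex mat"
  assumes "A \<in> carrier_mat n n" and "mat_adjoint A = A"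
  shows "\<exists>U lam. spectral_decomposition n U lam A"
  using assms
proof (induction n arbitrary: A)
  case 0
  then have "spectral_decomposition 0 (1\<^sub>m 0) (\<lambda>_. 0) A"
    unfolding spectral_decomposition_def by (auto intro!: eq_matI)
  then show ?case by blast
next
  case (Suc m A)
  obtain es where "char_poly A = (\<Prod>a\<leftarrow>es. [:- a, 1:])" and "length es = Suc m"
    using char_poly_factorized[OF Suc.prems(1)] by blast
  then obtain e where "poly (char_poly A) e = 0" by (cases es) auto
  then obtain v where "eigenvector A v e"
    using eigenvalue_root_char_poly[OF Suc.prems(1)] unfolding eigenvalue_def by blast
  then have v: "v \<in> carrier_vec (Suc m)" "v \<noteq> 0\<^sub>v (Suc m)" "A *\<^sub>v v = e \<cdot>\<^sub>v v"
    using Suc.prems(1) unfolding eigenvector_def by auto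
  obtain W c where W: "W \<in> carrier_mat (Suc m) (Suc m)" "mat_adjoint W * W = 1\<^sub>m (Suc m)"
    and W0: "col W 0 = c \<cdot>\<^sub>v v"
    using unitary_mat_first_col[OF v(1,2)] by blast
  let ?A = "mat_adjoint W * A * W"
  have A': "?A \<in> carrier_mat (Suc m) (Suc m)"
    using W(1) Suc.prems(1) by (meson mat_adjoint_carrier mult_carrier_mat)
  have herm: "mat_adjoint ?A = ?A"
    using W(1) Suc.prems
    by (simp add: mat_adjoint_mult[of _ "Suc m" "Suc m" _ "Suc m"] assoc_mult_mat[of _ "Suc m" "Suc m" _ "Suc m" _ "Suc m"])
  obtain A3 where A3: "A3 \<in> carrier_mat m m" "mat_adjoint A3 = A3"
    and split: "?A = four_block_mat (mat 1 1 (\<lambda>_. complex_of_real (Re e))) (0\<^sub>m 1 m) (0\<^sub>m m 1) A3"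
    by (rule hermitian_first_col_block[OF A' herm
        first_col_unitary_conj_eigenvector[OF Suc.prems(1) W v(1,3) W0]])
  obtain U3 lam3 where "spectral_decomposition m U3 lam3 A3" using Suc.IH[OF A3] by blast
  from spectral_decomposition_block_diag[OF spectral_decomposition_scalar this]
  have "spectral_decomposition (Suc m) (four_block_mat (1\<^sub>m 1) (0\<^sub>m 1 m) (0\<^sub>m m 1) U3)
      (\<lambda>i. if i < 1 then Re e else lam3 (i - 1)) ?A"
    unfolding split by simp
  from spectral_decomposition_unitary_conj[OF W Suc.prems(1) this]
  show ?case by blast
qed

lemma spectral_decomposition_adjoint_mult_self:
  assumes "spectral_decomposition n U lam A"
  shows "spectral_decomposition n U (\<lambda>i. lam i * lam i) (mat_adjoint A * A)"
proof -
  let ?L = "\<lambda>lam. mat_diag n (\<lambda>i. complex_of_real (lam i))"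
  have U: "U \<in> carrier_mat n n" "mat_adjoint U * U = 1\<^sub>m n" and A: "A = U * ?L lam * mat_adjoint U"
    using assms unfolding spectral_decomposition_def by auto
  note [simp] = assoc_mult_mat[of _ n n _ n _ n] mult_carrier_mat[of _ n n _ n]
  have "mat_adjoint A = U * ?L lam * mat_adjoint U"
    unfolding A using U(1) by (simp add: mat_adjoint_mult[of _ n n _ n])
  then have "mat_adjoint A * A = U * (?L lam * (mat_adjoint U * U) * ?L lam) * mat_adjoint U"
    unfolding A using U(1) by simp
  also have "\<dots> = U * ?L (\<lambda>i. lam i * lam i) * mat_adjoint U"
    unfolding U(2) by (simp add: left_mult_one_mat[OF mat_diag_dim])
  finally show ?thesis using U unfolding spectral_decomposition_def by simp
qed

lemma spectral_decomposition_gram_nonneg: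
  fixes Y :: "complex mat"
  assumes Y: "Y \<in> carrier_mat m n" and spec: "spectral_decomposition n U lam (mat_adjoint Y * Y)"
    and i: "i < n"
  shows "0 \<le> lam i"
proof -
  let ?L = "mat_diag n (\<lambda>i. complex_of_real (lam i))"
  have U: "U \<in> carrier_mat n n" "mat_adjoint U * U = 1\<^sub>m n"
    and YY: "mat_adjoint Y * Y = U * ?L * mat_adjoint U"
    using spec unfolding spectral_decomposition_def by auto
  have W: "Y * U \<in> carrier_mat m n" using Y U by simp
  have aU: "mat_adjoint U \<in> carrier_mat n n" and aY: "mat_adjoint Y \<in> carrier_mat n m"
    using U Y by auto
  have "mat_adjoint (Y * U) * (Y * U) = mat_adjoint U * (mat_adjoint Y * (Y * U))"
    unfolding mat_adjoint_mult[OF Y U(1)] by (rule assoc_mult_mat[OF aU aY W])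
  also have "\<dots> = mat_adjoint U * (mat_adjoint Y * Y) * U"
    using assoc_mult_mat[OF aY Y U(1)] assoc_mult_mat[OF aU mult_carrier_mat[OF aY Y] U(1)] by simp
  also have "\<dots> = mat_adjoint (mat_adjoint U * U) * ?L * (mat_adjoint U * U)"
    unfolding YY by (rule compression_unitary_conj[OF U(1) U(1) mat_diag_dim])
  also have "\<dots> = ?L" unfolding U(2) by (simp add: left_mult_one_mat[OF mat_diag_dim] right_mult_one_mat[OF mat_diag_dim])
  finally have "complex_of_real (lam i) = (mat_adjoint (Y * U) * (Y * U)) $$ (i, i)"
    using i by (simp add: mat_diag_def)
  also have "\<dots> = (\<Sum>l<m. cnj ((Y * U) $$ (l, i)) * (Y * U) $$ (l, i))"
    using index_mult_mat_sum[OF mat_adjoint_carrier[OF W] W i i] carrier_matD[OF W] i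
    by (auto intro!: sum.cong)
  also have "\<dots> = complex_of_real (\<Sum>l<m. (cmod ((Y * U) $$ (l, i)))\<^sup>2)"
    by (simp only: of_real_sum complex_norm_square mult.commute)
  finally have "lam i = (\<Sum>l<m. (cmod ((Y * U) $$ (l, i)))\<^sup>2)" by (simp only: of_real_eq_iff)
  then show ?thesis by (simp add: sum_nonneg)
qed

section \<open>Eigenvalues\<close>

lemma order_linear_factor: "order a [:- e, 1:] = (if a = e then 1 else 0)"
proof (cases "a = e")
  case True
  then show ?thesis using order_power_n_n[of a 1] by simp
next
  case False
  then show ?thesis using order_root[of "[:- e, 1:]" a] by simp
qed

lemma order_prod_linear_factors: "order (a :: 'a :: idom) (\<Prod>e\<leftarrow>es. [:- e, 1:]) = count (mset es) a"
proof (induction es)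
  case Nil
  then show ?case using order_root[of 1 a] by simp
next
  case (Cons e es)
  have "(\<Prod>e\<leftarrow>es. [:- e, 1:]) \<noteq> 0" by (auto simp: prod_list_zero_iff)
  then have "order a ([:- e, 1:] * (\<Prod>e\<leftarrow>es. [:- e, 1:])) = order a [:- e, 1:] + order a (\<Prod>e\<leftarrow>es. [:- e, 1:])"
    by (intro order_mult no_zero_divisors) simp_all
  then show ?case using Cons order_linear_factor[of a e] by simp
qed

lemma mset_eq_if_prod_linear_factors_eq:
  fixes es fs :: "'a :: idom list"
  assumes "(\<Prod>e\<leftarrow>es. [:- e, 1:]) = (\<Prod>e\<leftarrow>fs. [:- e, 1:])"
  shows "mset es = mset fs"
  using order_prod_linear_factors[of _ es] order_prod_linear_factors[of _ fs] assms
  by (intro multiset_eqI) simp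

lemma eigvals_eqI:
  assumes "length es = dim_row A" and "char_poly A = (\<Prod>e\<leftarrow>es. [:- e, 1:])"
  shows "mset (eigvals A) = mset es"
proof -
  have "length (eigvals A) = dim_row A \<and> char_poly A = (\<Prod>e\<leftarrow>eigvals A. [:- e, 1:])"
    unfolding eigvals_def by (rule someI[of _ es]) (use assms in simp)
  then show ?thesis using assms(2) by (auto intro: mset_eq_if_prod_linear_factors_eq)
qed

lemma eigvals_similar_diag:
  assumes U: "U \<in> carrier_mat n n" and V: "V \<in> carrier_mat n n" and UV: "U * V = 1\<^sub>m n"
  shows "mset (eigvals (U * mat_diag n f * V)) = mset (map f [0..<n])"
proof -
  have sim: "similar_mat (U * mat_diag n f * V) (mat_diag n f)"
    unfolding similar_mat_def
    using similar_mat_witI[OF UV mat_mult_left_right_inverse[OF U V UV] refl _ mat_diag_dim U V] U V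
    by (meson mat_diag_dim mult_carrier_mat)
  have "char_poly (U * mat_diag n f * V) = (\<Prod>a\<leftarrow>diag_mat (mat_diag n f). [:- a, 1:])"
    unfolding char_poly_similar[OF sim]
    by (rule char_poly_upper_triangular[OF mat_diag_dim]) (auto simp: upper_triangular_def mat_diag_def)
  also have "diag_mat (mat_diag n f) = map f [0..<n]"
    by (auto simp: diag_mat_def mat_diag_def intro!: map_cong)
  finally show ?thesis using U by (intro eigvals_eqI) simp_all
qed

lemma eigvals_spectral_decomposition:
  assumes "spectral_decomposition n U lam A"
  shows "mset (eigvals A) = mset (map (\<lambda>i. complex_of_real (lam i)) [0..<n])"
  using assms eigvals_similar_diag[of U n "mat_adjoint U"] unitary_right_inverse[of U n]
  unfolding spectral_decomposition_def by auto

lemma det_four_block_mat_swap: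
  fixes A B C D :: "'a :: comm_ring_1 mat"
  assumes "A \<in> carrier_mat n n" "B \<in> carrier_mat n n" "C \<in> carrier_mat n n" "D \<in> carrier_mat n n"
  shows "det (four_block_mat A B C D) = det (four_block_mat D C B A)"
proof -
  let ?M = "four_block_mat A B C D"
  define M1 where "M1 = mat (n + n) (n + n) (\<lambda>(i, j). ?M $$ (if i < n then i + n else i - n, j))"
  have M: "?M \<in> carrier_mat (n + n) (n + n)" using assms by simp
  have M1: "M1 \<in> carrier_mat (n + n) (n + n)" by (simp add: M1_def)
  have "det ?M = (-1) ^ (n * n) * ((-1) ^ (n * n) * det (mat (n + n) (n + n)
      (\<lambda>(i, j). M1 $$ (i, if j < n then j + n else j - n))))"
    using det_swap_rows[OF M] det_swap_cols[OF M1] by (simp add: M1_def)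
  also have "mat (n + n) (n + n) (\<lambda>(i, j). M1 $$ (i, if j < n then j + n else j - n))
      = four_block_mat D C B A"
    using assms by (intro eq_matI) (auto simp: M1_def)
  also have "(-1) ^ (n * n) * ((-1) ^ (n * n) * det (four_block_mat D C B A)) = det (four_block_mat D C B A)"
    by (simp flip: power_add mult_2)
  finally show ?thesis .
qed

lemma char_poly_mult_commute:
  fixes A B :: "'a :: idom mat"
  assumes A: "A \<in> carrier_mat n n" and B: "B \<in> carrier_mat n n"
  shows "char_poly (A * B) = char_poly (B * A)"
proof -
  let ?l = "map_mat (\<lambda>x :: 'a. [:x:])"
  let ?T = "[:0, 1:] \<cdot>\<^sub>m 1\<^sub>m n :: 'a poly mat"
  interpret const: semiring_hom "\<lambda>x :: 'a. [:x:]" by unfold_locales (auto simp: one_pCons)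
  have lA: "?l A \<in> carrier_mat n n" and lB: "?l B \<in> carrier_mat n n" using A B by auto
  have char_poly_mult: "char_poly (C * D) = det (?T - ?l C * ?l D)"
    if "C \<in> carrier_mat n n" "D \<in> carrier_mat n n" for C D
  proof -
    have "char_poly_matrix (C * D) = ?T - ?l (C * D)"
      using that by (intro eq_matI) (auto simp: char_poly_matrix_def)
    then show ?thesis unfolding char_poly_def const.mat_hom_mult[OF that] by simp
  qed
  have "?l A * ?T = ?T * ?l A"
    using lA by (simp add: mult_smult_distrib[OF lA one_carrier_mat] mult_smult_assoc_mat[OF one_carrier_mat lA])
  then have "det (four_block_mat (1\<^sub>m n) (?l B) (?l A) ?T) = char_poly (B * A)"
    using det_four_block_mat[OF one_carrier_mat lB lA _] lA lB char_poly_mult[OF B A] by simp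
  moreover have "det (four_block_mat ?T (?l A) (?l B) (1\<^sub>m n)) = char_poly (A * B)"
    using det_four_block_mat[OF _ lA lB one_carrier_mat] lA lB char_poly_mult[OF A B] by simp
  ultimately show ?thesis using det_four_block_mat_swap[OF _ lA lB one_carrier_mat, of ?T] by simp
qed

lemma eigvals_mult_commute:
  assumes "A \<in> carrier_mat n n" and "B \<in> carrier_mat n n"
  shows "eigvals (A * B) = eigvals (B * A)"
  using char_poly_mult_commute[OF assms] assms by (simp add: eigvals_def)

section \<open>Products of the largest singular values\<close>

definition prod_largest :: "real list \<Rightarrow> nat \<Rightarrow> real" where
  "prod_largest xs k = (\<Prod>j<k. rev (sort xs) ! j)"

lemma nth_rev_sort_in_set: "j < length xs \<Longrightarrow> rev (sort xs) ! j \<in> set xs"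
  by (metis length_rev length_sort nth_mem set_rev set_sort)

lemma prod_largest_mset_cong: "mset xs = mset ys \<Longrightarrow> prod_largest xs k = prod_largest ys k"
  unfolding prod_largest_def by (metis properties_for_sort mset_sort sorted_sort)

lemma prod_largest_nonneg:
  assumes "\<And>x. x \<in> set xs \<Longrightarrow> 0 \<le> x" and "k \<le> length xs"
  shows "0 \<le> prod_largest xs k"
  unfolding prod_largest_def
proof (rule prod_nonneg)
  fix j assume "j \<in> {..<k}"
  then have "rev (sort xs) ! j \<in> set xs" using assms(2) by (simp add: nth_rev_sort_in_set)
  then show "0 \<le> rev (sort xs) ! j" using assms(1) by blast
qed

lemma prod_subset_sorted_le:
  assumes nonneg: "\<And>x. x \<in> set xs \<Longrightarrow> 0 \<le> x"
    and T: "T \<subseteq> {..<length xs}" "card T = k"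
  shows "(\<Prod>j\<in>T. rev (sort xs) ! j) \<le> prod_largest xs k"
proof -
  let ?ys = "rev (sort xs)"
  have fin: "finite T" using T(1) finite_subset by blast
  have "(\<Prod>j\<in>T. ?ys ! j) = (\<Prod>j<k. ?ys ! pick T j)"
    using prod_pick[OF fin] T(2) by simp
  also have "\<dots> \<le> (\<Prod>j<k. ?ys ! j)"
  proof (rule prod_mono)
    fix j assume j: "j \<in> {..<k}"
    then have "pick T j < length xs" using pick_in_set[of j T] T by auto
    then have "?ys ! pick T j \<in> set xs" by (rule nth_rev_sort_in_set)
    moreover have "?ys ! pick T j \<le> ?ys ! j"
      using le_pick[of j T] j T \<open>pick T j < length xs\<close>
      by (auto simp: rev_nth intro!: sorted_nth_mono)
    ultimately show "0 \<le> ?ys ! pick T j \<and> ?ys ! pick T j \<le> ?ys ! j" using nonneg by auto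
  qed
  finally show ?thesis unfolding prod_largest_def .
qed

lemma sorted_permutation:
  obtains p where "p permutes {..<length xs}" and "\<And>i. i < length xs \<Longrightarrow> xs ! i = rev (sort xs) ! p i"
proof -
  have "mset xs = mset (rev (sort xs))" by simp
  from mset_eq_permutation[OF this] obtain p where p: "p permutes {..<length (rev (sort xs))}"
    and xs: "permute_list p (rev (sort xs)) = xs" by blast
  have "xs ! i = rev (sort xs) ! p i" if "i < length xs" for i
    using permute_list_nth[OF p, of i] that unfolding xs by simp
  moreover have "p permutes {..<length xs}" using p by simp
  ultimately show ?thesis using that by blast
qed

lemma prod_le_prod_largest:
  assumes "\<And>x. x \<in> set xs \<Longrightarrow> 0 \<le> x" and S: "S \<subseteq> {..<length xs}" "card S = k"
  shows "(\<Prod>i\<in>S. xs ! i) \<le> prod_largest xs k"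
proof -
  obtain p where p: "p permutes {..<length xs}" and xs: "\<And>i. i < length xs \<Longrightarrow> xs ! i = rev (sort xs) ! p i"
    using sorted_permutation[of xs] by blast
  have inj: "inj_on p S" using permutes_inj[OF p] by (simp add: inj_on_def inj_def)
  have "(\<Prod>i\<in>S. xs ! i) = (\<Prod>i\<in>S. rev (sort xs) ! p i)" using S xs by (intro prod.cong) auto
  also have "\<dots> = (\<Prod>j\<in>p ` S. rev (sort xs) ! j)" by (simp add: prod.reindex[OF inj])
  also have "\<dots> \<le> prod_largest xs k"
    using permutes_image[OF p] S card_image[OF inj] by (intro prod_subset_sorted_le assms(1)) auto
  finally show ?thesis .
qed

lemma prod_largest_attained:
  assumes "k \<le> length xs"
  obtains S where "S \<subseteq> {..<length xs}" and "card S = k" and "(\<Prod>i\<in>S. xs ! i) = prod_largest xs k"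
proof -
  obtain p where p: "p permutes {..<length xs}" and xs: "\<And>i. i < length xs \<Longrightarrow> xs ! i = rev (sort xs) ! p i"
    using sorted_permutation[of xs] by blast
  define S where "S = {i. i < length xs \<and> p i < k}"
  have inj: "inj_on p S" using permutes_inj[OF p] by (simp add: inj_on_def inj_def)
  have img: "p ` S = {..<k}"
  proof
    show "{..<k} \<subseteq> p ` S"
    proof
      fix j assume j: "j \<in> {..<k}"
      then obtain i where "i < length xs" "p i = j"
        using permutes_image[OF p] assms by (metis imageE lessThan_iff order_less_le_trans)
      then show "j \<in> p ` S" using j unfolding S_def by blast
    qed
  qed (auto simp: S_def)
  have "(\<Prod>i\<in>S. xs ! i) = (\<Prod>i\<in>S. rev (sort xs) ! p i)" using xs by (intro prod.cong) (auto simp: S_def)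
  also have "\<dots> = prod_largest xs k"
    unfolding prod.reindex[OF inj, unfolded comp_def, symmetric] img prod_largest_def ..
  finally show ?thesis using that[of S] card_image[OF inj] img by (auto simp: S_def)
qed

lemma prod_sigma_eq_prod_largest:
  "(\<Prod>j=1..k. sigma j Y) = prod_largest (map (\<lambda>e. sqrt (Re e)) (eigvals (mat_adjoint Y * Y))) k"
  unfolding prod_largest_def sigma_def sing_vals_def by (simp add: prod.atLeast1_atMost_eq)

lemma prod_sigma_spectral_decomposition:
  assumes "spectral_decomposition n U gam (mat_adjoint Y * Y)"
  shows "(\<Prod>j=1..k. sigma j Y) = prod_largest (map (\<lambda>i. sqrt (gam i)) [0..<n]) k"
proof -
  have "mset (map (\<lambda>e. sqrt (Re e)) (eigvals (mat_adjoint Y * Y))) = mset (map (\<lambda>i. sqrt (gam i)) [0..<n])"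
    unfolding mset_map eigvals_spectral_decomposition[OF assms] by (simp add: multiset.map_comp comp_def)
  then show ?thesis unfolding prod_sigma_eq_prod_largest by (rule prod_largest_mset_cong)
qed

lemma sing_vals_gram_commute:
  fixes B :: "complex mat"
  assumes "B \<in> carrier_mat n n"
  shows "sing_vals (B * mat_adjoint B) = sing_vals (mat_adjoint B * B)"
proof -
  note [simp] = assoc_mult_mat[of _ n n _ n _ n] mult_carrier_mat[of _ n n _ n]
  have "mat_adjoint (B * mat_adjoint B) = B * mat_adjoint B"
    using mat_adjoint_gram[OF mat_adjoint_carrier[OF assms]] by simp
  then have "eigvals (mat_adjoint (B * mat_adjoint B) * (B * mat_adjoint B))
      = eigvals (B * (mat_adjoint B * B * mat_adjoint B))"
    using assms by simp
  also have "\<dots> = eigvals (mat_adjoint B * B * mat_adjoint B * B)"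
    using eigvals_mult_commute[of B n "mat_adjoint B * B * mat_adjoint B"] assms by simp
  also have "\<dots> = eigvals (mat_adjoint (mat_adjoint B * B) * (mat_adjoint B * B))"
    using assms by (simp add: mat_adjoint_gram)
  finally show ?thesis unfolding sing_vals_def by simp
qed

lemma prod_sigma_gram:
  fixes B :: "complex mat"
  assumes B: "B \<in> carrier_mat m n" and spec: "spectral_decomposition n Q lam (mat_adjoint B * B)"
  shows "(\<Prod>j=1..k. sigma j (mat_adjoint B * B)) = prod_largest (map lam [0..<n]) k"
proof -
  have map_eq: "map (\<lambda>i. sqrt (lam i * lam i)) [0..<n] = map lam [0..<n]"
    using spectral_decomposition_gram_nonneg[OF B spec] by simp
  show ?thesis
    using prod_sigma_spectral_decomposition[OF spectral_decomposition_adjoint_mult_self[OF spec]]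
    unfolding map_eq .
qed

text \<open>Nonnegativity is not automatic: sigma takes real square roots of eigenvalues, and sqrt is
  negative on negative reals.\<close>

lemma prod_sigma_gram_nonneg:
  fixes B :: "complex mat"
  assumes B: "B \<in> carrier_mat m n" and k: "k \<le> n"
  shows "0 \<le> (\<Prod>j=1..k. sigma j (mat_adjoint B * B))"
proof -
  obtain Q lam where spec: "spectral_decomposition n Q lam (mat_adjoint B * B)"
    using hermitian_spectral_decomposition[OF mult_carrier_mat[OF mat_adjoint_carrier[OF B] B] mat_adjoint_gram[OF B]]
    by blast
  show ?thesis
    unfolding prod_sigma_gram[OF B spec] using spectral_decomposition_gram_nonneg[OF B spec] k
    by (intro prod_largest_nonneg) auto
qed

section \<open>Determinants of compressions\<close>

lemma det_mat_diag: "det (mat_diag n f) = (\<Prod>j<n. f j)"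
proof -
  have "det (mat_diag n f) = prod_list (diag_mat (mat_diag n f))"
    by (rule det_upper_triangular[OF _ mat_diag_dim]) (auto simp: upper_triangular_def mat_diag_def)
  also have "diag_mat (mat_diag n f) = map f [0..<n]"
    by (auto simp: diag_mat_def mat_diag_def intro!: map_cong)
  finally show ?thesis by (simp add: prod.distinct_set_conv_list[symmetric] atLeast0LessThan)
qed

lemma det_compression_diag:
  fixes Y :: "complex mat"
  assumes Y: "Y \<in> carrier_mat n k"
  shows "det (mat_adjoint Y * mat_diag n (\<lambda>i. complex_of_real (lam i)) * Y)
       = complex_of_real (\<Sum>S | S \<subseteq> {0..<n} \<and> card S = k. (\<Prod>i\<in>S. lam i) * (cmod (det (row_submat Y S)))\<^sup>2)"
proof -
  let ?L = "mat_diag n (\<lambda>i. complex_of_real (lam i))"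
  have "det (col_submat (mat_adjoint Y * ?L) S) * det (row_submat Y S)
      = complex_of_real ((\<Prod>i\<in>S. lam i) * (cmod (det (row_submat Y S)))\<^sup>2)"
    if S: "S \<subseteq> {0..<n}" "card S = k" for S
  proof -
    have R: "row_submat Y S \<in> carrier_mat k k" using row_submat_carrier[of Y S] Y S by simp
    have "col_submat (mat_adjoint Y * ?L) S
        = mat_adjoint (row_submat Y S) * mat_diag k (\<lambda>j. complex_of_real (lam (pick S j)))"
      using col_submat_mult_diag[of "mat_adjoint Y" k n S] col_submat_mat_adjoint[of S Y] Y S by simp
    then have "det (col_submat (mat_adjoint Y * ?L) S)
        = cnj (det (row_submat Y S)) * complex_of_real (\<Prod>j<k. lam (pick S j))"
      using det_mult[OF mat_adjoint_carrier[OF R] mat_diag_dim] det_mat_adjoint[OF R]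
      by (simp add: det_mat_diag)
    also have "(\<Prod>j<k. lam (pick S j)) = (\<Prod>i\<in>S. lam i)"
      using prod_pick[of S lam] S finite_subset[of S "{0..<n}"] by simp
    also have "cnj (det (row_submat Y S)) * complex_of_real (\<Prod>i\<in>S. lam i) * det (row_submat Y S)
        = complex_of_real (\<Prod>i\<in>S. lam i) * complex_of_real ((cmod (det (row_submat Y S)))\<^sup>2)"
      unfolding complex_norm_square by (simp only: ac_simps)
    finally show ?thesis by (simp only: of_real_mult)
  qed
  then show ?thesis
    using cauchy_binet[OF mult_carrier_mat[OF mat_adjoint_carrier[OF Y] mat_diag_dim] Y] by simp
qed

lemma det_compression_diag_le:
  fixes Y :: "complex mat"
  assumes Y: "Y \<in> carrier_mat n k" and nonneg: "\<And>i. i < n \<Longrightarrow> 0 \<le> lam i"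
  shows "Re (det (mat_adjoint Y * mat_diag n (\<lambda>i. complex_of_real (lam i)) * Y))
       \<le> prod_largest (map lam [0..<n]) k * Re (det (mat_adjoint Y * Y))"
proof -
  let ?Sk = "{S. S \<subseteq> {0..<n} \<and> card S = k}"
  let ?c = "\<lambda>S. (cmod (det (row_submat Y S)))\<^sup>2"
  have "mat_adjoint Y * Y = mat_adjoint Y * mat_diag n (\<lambda>i. complex_of_real 1) * Y"
    using Y by simp
  then have YY: "Re (det (mat_adjoint Y * Y)) = (\<Sum>S\<in>?Sk. ?c S)"
    using det_compression_diag[OF Y, of "\<lambda>_. 1"] by simp
  have "(\<Sum>S\<in>?Sk. (\<Prod>i\<in>S. lam i) * ?c S) \<le> (\<Sum>S\<in>?Sk. prod_largest (map lam [0..<n]) k * ?c S)"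
  proof (rule sum_mono)
    fix S assume "S \<in> ?Sk"
    then have "(\<Prod>i\<in>S. lam i) = (\<Prod>i\<in>S. map lam [0..<n] ! i)" by (intro prod.cong) auto
    also have "\<dots> \<le> prod_largest (map lam [0..<n]) k"
      using \<open>S \<in> ?Sk\<close> nonneg by (intro prod_le_prod_largest) auto
    finally show "(\<Prod>i\<in>S. lam i) * ?c S \<le> prod_largest (map lam [0..<n]) k * ?c S"
      by (rule mult_right_mono) simp
  qed
  then show ?thesis
    unfolding YY det_compression_diag[OF Y] Re_complex_of_real by (simp add: sum_distrib_left)
qed

lemma det_compression_le:
  fixes H Z :: "complex mat"
  assumes H: "spectral_decomposition n U lam H" and nonneg: "\<And>i. i < n \<Longrightarrow> 0 \<le> lam i"
    and Z: "Z \<in> carrier_mat n k"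
  shows "Re (det (mat_adjoint Z * H * Z)) \<le> prod_largest (map lam [0..<n]) k * Re (det (mat_adjoint Z * Z))"
proof -
  have U: "U \<in> carrier_mat n n" "mat_adjoint U * U = 1\<^sub>m n"
    and H: "H = U * mat_diag n (\<lambda>i. complex_of_real (lam i)) * mat_adjoint U"
    using H unfolding spectral_decomposition_def by auto
  have Y: "mat_adjoint U * Z \<in> carrier_mat n k" using mult_carrier_mat[OF mat_adjoint_carrier[OF U(1)] Z] .
  have "mat_adjoint Z * Z = mat_adjoint Z * (U * 1\<^sub>m n * mat_adjoint U) * Z"
    using unitary_right_inverse[OF U] U Z by simp
  also have "\<dots> = mat_adjoint (mat_adjoint U * Z) * (mat_adjoint U * Z)"
    using compression_unitary_conj[OF U(1) Z one_carrier_mat] right_mult_one_mat[OF mat_adjoint_carrier[OF Y]]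
    by simp
  finally show ?thesis
    unfolding H compression_unitary_conj[OF U(1) Z mat_diag_dim]
    using det_compression_diag_le[OF Y nonneg] by simp
qed

lemma det_compression_gram_le:
  fixes B Z :: "complex mat"
  assumes B: "B \<in> carrier_mat m n" and Z: "Z \<in> carrier_mat n k"
  shows "Re (det (mat_adjoint Z * (mat_adjoint B * B) * Z))
       \<le> (\<Prod>j=1..k. sigma j (mat_adjoint B * B)) * Re (det (mat_adjoint Z * Z))"
proof -
  obtain Q lam where spec: "spectral_decomposition n Q lam (mat_adjoint B * B)"
    using hermitian_spectral_decomposition[OF mult_carrier_mat[OF mat_adjoint_carrier[OF B] B] mat_adjoint_gram[OF B]]
    by blast
  show ?thesis
    using det_compression_le[OF spec spectral_decomposition_gram_nonneg[OF B spec] Z]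
    unfolding prod_sigma_gram[OF B spec] .
qed

definition selection_mat :: "nat \<Rightarrow> nat set \<Rightarrow> 'a :: zero_neq_one mat" where
  "selection_mat n S = mat n (card S) (\<lambda>(l, j). if l = pick S j then 1 else 0)"

lemma selection_mat_carrier[simp]: "selection_mat n S \<in> carrier_mat n (card S)"
  by (simp add: selection_mat_def)

lemma selection_mat_compress_diag:
  assumes "S \<subseteq> {0..<n}"
  shows "mat_adjoint (selection_mat n S) * mat_diag n f * selection_mat n S
       = mat_diag (card S) (\<lambda>j. f (pick S j) :: complex)"
proof (rule eq_matI)
  let ?E = "selection_mat n S :: complex mat"
  fix i j assume "i < dim_row (mat_diag (card S) (\<lambda>j. f (pick S j)))"
    "j < dim_col (mat_diag (card S) (\<lambda>j. f (pick S j)))"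
  then have i: "i < card S" and j: "j < card S" by (auto simp: mat_diag_def)
  have pick: "pick S i < n" "pick S i = pick S j \<longleftrightarrow> i = j"
    using pick_in_set[OF disjI1, OF i] assms inj_onD[OF inj_on_pick, of S i j] i j by auto
  have "mat_adjoint ?E * mat_diag n f = mat (card S) n (\<lambda>(i, l). mat_adjoint ?E $$ (i, l) * f l)"
    by (rule mat_diag_mult_right) simp
  also have "\<dots> = mat (card S) n (\<lambda>(i, l). if l = pick S i then f l else 0)"
    by (rule eq_matI) (auto simp: selection_mat_def)
  finally have ED: "mat_adjoint ?E * mat_diag n f = mat (card S) n (\<lambda>(i, l). if l = pick S i then f l else 0)" .
  have "(mat_adjoint ?E * mat_diag n f * ?E) $$ (i, j)
      = (\<Sum>l<n. (if l = pick S i then f l else 0) * (if l = pick S j then 1 else 0))"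
    unfolding ED using i j by (subst index_mult_mat_sum[of _ "card S" n _ "card S"]) (auto simp: selection_mat_def)
  also have "\<dots> = (\<Sum>l<n. if l = pick S i then (if i = j then f (pick S i) else 0) else 0)"
    using pick by (intro sum.cong) auto
  also have "\<dots> = mat_diag (card S) (\<lambda>j. f (pick S j)) $$ (i, j)"
    using pick i j by (simp add: mat_diag_def)
  finally show "(mat_adjoint ?E * mat_diag n f * ?E) $$ (i, j) = mat_diag (card S) (\<lambda>j. f (pick S j)) $$ (i, j)" .
qed (auto simp: mat_diag_def selection_mat_def)

lemma det_compression_attained:
  fixes H :: "complex mat"
  assumes H: "spectral_decomposition n U lam H" and S: "S \<subseteq> {0..<n}" "card S = k"
  obtains V where "V \<in> carrier_mat n k" and "mat_adjoint V * V = 1\<^sub>m k"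
    and "det (mat_adjoint V * H * V) = complex_of_real (\<Prod>i\<in>S. lam i)"
proof -
  let ?E = "selection_mat n S :: complex mat"
  have U: "U \<in> carrier_mat n n" "mat_adjoint U * U = 1\<^sub>m n"
    and H: "H = U * mat_diag n (\<lambda>i. complex_of_real (lam i)) * mat_adjoint U"
    using H unfolding spectral_decomposition_def by auto
  have E: "?E \<in> carrier_mat n k" using selection_mat_carrier[of n S] S by simp
  have V: "U * ?E \<in> carrier_mat n k" using U E by simp
  have UUE: "mat_adjoint U * (U * ?E) = ?E"
    using assoc_mult_mat[OF mat_adjoint_carrier[OF U(1)] U(1) E, symmetric] E by (simp add: U(2))
  have "mat_adjoint (U * ?E) * (U * ?E) = mat_adjoint (U * ?E) * (U * 1\<^sub>m n * mat_adjoint U) * (U * ?E)"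
    using unitary_right_inverse[OF U] U(1) V by simp
  also have "\<dots> = mat_adjoint ?E * mat_diag n (\<lambda>_. 1) * ?E"
    unfolding compression_unitary_conj[OF U(1) V one_carrier_mat] UUE by simp
  finally have VV: "mat_adjoint (U * ?E) * (U * ?E) = 1\<^sub>m k"
    using selection_mat_compress_diag[OF S(1), of "\<lambda>_. 1"] S by simp
  have "mat_adjoint (U * ?E) * H * (U * ?E) = mat_adjoint ?E * mat_diag n (\<lambda>i. complex_of_real (lam i)) * ?E"
    unfolding H compression_unitary_conj[OF U(1) V mat_diag_dim] UUE ..
  then have "det (mat_adjoint (U * ?E) * H * (U * ?E)) = complex_of_real (\<Prod>i\<in>S. lam i)"
    using selection_mat_compress_diag[OF S(1)] prod_pick[of S lam] S finite_subset[OF S(1)]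
    by (simp add: det_mat_diag)
  then show ?thesis using that V VV by blast
qed

lemma det_compression_eq_prod_sigma_sq:
  fixes M :: "complex mat"
  assumes M: "M \<in> carrier_mat m n" and k: "k \<le> n"
  obtains V where "V \<in> carrier_mat n k" and "mat_adjoint V * V = 1\<^sub>m k"
    and "det (mat_adjoint V * (mat_adjoint M * M) * V) = complex_of_real ((\<Prod>j=1..k. sigma j M)\<^sup>2)"
proof -
  obtain R gam where spec: "spectral_decomposition n R gam (mat_adjoint M * M)"
    using hermitian_spectral_decomposition[OF mult_carrier_mat[OF mat_adjoint_carrier[OF M] M] mat_adjoint_gram[OF M]]
    by blast
  note gam = spectral_decomposition_gram_nonneg[OF M spec]
  let ?xs = "map (\<lambda>i. sqrt (gam i)) [0..<n]"
  obtain S where S: "S \<subseteq> {..<n}" "card S = k" and max: "(\<Prod>i\<in>S. ?xs ! i) = prod_largest ?xs k"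
    using prod_largest_attained[of k ?xs] k by auto
  have "(\<Prod>i\<in>S. ?xs ! i) = (\<Prod>i\<in>S. sqrt (gam i))"
    using S(1) by (intro prod.cong) auto
  then have "(\<Prod>j=1..k. sigma j M)\<^sup>2 = (\<Prod>i\<in>S. (sqrt (gam i))\<^sup>2)"
    unfolding prod_sigma_spectral_decomposition[OF spec] max[symmetric] by (simp add: prod_power_distrib)
  also have "\<dots> = (\<Prod>i\<in>S. gam i)"
    using S(1) gam by (intro prod.cong) auto
  finally have "(\<Prod>j=1..k. sigma j M)\<^sup>2 = (\<Prod>i\<in>S. gam i)" .
  moreover have "S \<subseteq> {0..<n}" using S(1) by auto
  then obtain V where "V \<in> carrier_mat n k" "mat_adjoint V * V = 1\<^sub>m k"
    "det (mat_adjoint V * (mat_adjoint M * M) * V) = complex_of_real (\<Prod>i\<in>S. gam i)"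
    using det_compression_attained[OF spec _ S(2)] by blast
  ultimately show ?thesis using that by simp
qed

section \<open>The main inequality\<close>

theorem prod_sigma_adjoint_unitary_le:
  fixes B U :: "complex mat"
  assumes B: "B \<in> carrier_mat n n" and U: "U \<in> carrier_mat n n" "mat_adjoint U * U = 1\<^sub>m n"
    and k: "k \<le> n"
  shows "(\<Prod>j=1..k. sigma j (mat_adjoint B * U * B)) \<le> (\<Prod>j=1..k. sigma j (mat_adjoint B * B))"
proof -
  let ?M = "mat_adjoint B * U * B"
  let ?T = "\<Prod>j=1..k. sigma j (mat_adjoint B * B)"
  have M: "?M \<in> carrier_mat n n" using mult_carrier_mat[OF mult_carrier_mat[OF mat_adjoint_carrier[OF B] U(1)] B] .
  obtain V where V: "V \<in> carrier_mat n k" "mat_adjoint V * V = 1\<^sub>m k"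
    and det_V: "det (mat_adjoint V * (mat_adjoint ?M * ?M) * V) = complex_of_real ((\<Prod>j=1..k. sigma j ?M)\<^sup>2)"
    by (rule det_compression_eq_prod_sigma_sq[OF M k])
  let ?Z = "U * B * V"
  have Z: "?Z \<in> carrier_mat n k" using mult_carrier_mat[OF mult_carrier_mat[OF U(1) B] V(1)] .
  note [simp] = assoc_mult_mat[of _ k n _ n _ n] assoc_mult_mat[of _ k n _ n _ k]
    assoc_mult_mat[of _ n n _ n _ n] assoc_mult_mat[of _ n n _ n _ k]
    mult_carrier_mat[of _ k n _ n] mult_carrier_mat[of _ n n _ n] mult_carrier_mat[of _ n n _ k]
    mat_adjoint_mult[of _ n n _ n] mat_adjoint_mult[of _ n n _ k]
  have compress_M: "mat_adjoint V * (mat_adjoint ?M * ?M) * V = mat_adjoint ?Z * (B * mat_adjoint B) * ?Z"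
    using B U V by simp
  have "mat_adjoint U * (U * (B * V)) = B * V"
    using assoc_mult_mat[OF mat_adjoint_carrier[OF U(1)] U(1) mult_carrier_mat[OF B V(1)], symmetric] B V
    by (simp add: U(2))
  then have compress_Z: "mat_adjoint ?Z * ?Z = mat_adjoint V * (mat_adjoint B * B) * V"
    using B U V by simp
  have "(\<Prod>j=1..k. sigma j ?M)\<^sup>2 = Re (det (mat_adjoint V * (mat_adjoint ?M * ?M) * V))"
    by (simp only: det_V Re_complex_of_real)
  also have "\<dots> = Re (det (mat_adjoint ?Z * (mat_adjoint (mat_adjoint B) * mat_adjoint B) * ?Z))"
    unfolding compress_M mat_adjoint_adjoint ..
  also have "\<dots> \<le> ?T * Re (det (mat_adjoint ?Z * ?Z))"
    using det_compression_gram_le[OF mat_adjoint_carrier[OF B] Z] sing_vals_gram_commute[OF B]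
    by (simp add: sigma_def)
  also have "\<dots> \<le> ?T * (?T * Re (det (mat_adjoint V * V)))"
    unfolding compress_Z
    by (rule mult_left_mono[OF det_compression_gram_le[OF B V(1)] prod_sigma_gram_nonneg[OF B k]])
  finally have "(\<Prod>j=1..k. sigma j ?M)\<^sup>2 \<le> ?T\<^sup>2" using V(2) by (simp add: power2_eq_square)
  then show ?thesis using prod_sigma_gram_nonneg[OF B k] by (rule power2_le_imp_le)
qed

lemma mat_adjoint_diag_congruence:
  fixes X :: "complex mat"
  assumes "X \<in> carrier_mat n m"
  shows "mat_adjoint (mat_diag n s * X) * mat_diag n g * (mat_diag n s * X)
       = mat_adjoint X * mat_diag n (\<lambda>i. cnj (s i) * g i * s i) * X"
proof -
  have "mat_diag n (\<lambda>i. cnj (s i) * g i * s i) = mat_diag n (\<lambda>i. cnj (s i)) * (mat_diag n g * mat_diag n s)"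
    by (simp add: mult.assoc)
  then show ?thesis
    using assms
    by (simp del: mat_diag_diag add: mat_adjoint_mult[of _ n n _ m] assoc_mult_mat[of _ m n _ n _ n]
        assoc_mult_mat[of _ m n _ n _ m] assoc_mult_mat[of _ n n _ n _ m] mult_carrier_mat[of _ m n _ n]
        mult_carrier_mat[of _ n n _ n] mult_carrier_mat[of _ n n _ m])
qed

lemma sqrt_abs_phase_factorization:
  fixes z :: complex
  defines "s \<equiv> complex_of_real (sqrt (cmod z))"
    and "u \<equiv> if z = 0 then 1 else z / complex_of_real (cmod z)"
  shows "cnj s * u * s = z" and "cnj s * s = complex_of_real (cmod z)" and "cnj u * u = 1"
proof -
  show ss: "cnj s * s = complex_of_real (cmod z)"
    by (simp add: s_def flip: of_real_mult)
  show "cnj s * u * s = z"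
  proof (cases "z = 0")
    case False
    then have "cnj s * u * s = (cnj s * s) * (z / complex_of_real (cmod z))"
      by (simp add: u_def ac_simps)
    also have "\<dots> = z" unfolding ss using False by simp
    finally show ?thesis .
  qed (simp add: s_def)
  have "cmod u = 1" by (simp add: u_def norm_divide)
  then show "cnj u * u = 1" using complex_norm_square[of u] by (simp add: mult.commute)
qed

theorem lemma2p1:
  fixes n k :: nat and d :: "nat \<Rightarrow> complex" and X :: "complex mat"
  assumes "X \<in> carrier_mat n n"
    and "1 \<le> k" and "k \<le> n"
  shows "(\<Prod>j=1..k. sigma j (mat_adjoint X * mat_diag n d * X))
       \<le> (\<Prod>j=1..k. sigma j (mat_adjoint X * mat_diag n (\<lambda>i. complex_of_real (cmod (d i))) * X))"
proof -
  define s where "s i = complex_of_real (sqrt (cmod (d i)))" for i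
  define u where "u i = (if d i = 0 then 1 else d i / complex_of_real (cmod (d i)))" for i
  have factor: "cnj (s i) * u i * s i = d i" "cnj (s i) * s i = complex_of_real (cmod (d i))"
    "cnj (u i) * u i = 1" for i
    unfolding s_def u_def by (rule sqrt_abs_phase_factorization)+
  let ?B = "mat_diag n s * X"
  have B: "?B \<in> carrier_mat n n" by (rule mult_carrier_mat[OF mat_diag_dim assms(1)])
  have D: "mat_adjoint X * mat_diag n d * X = mat_adjoint ?B * mat_diag n u * ?B"
    using mat_adjoint_diag_congruence[OF assms(1), of s u] factor by simp
  have abs_D: "mat_adjoint X * mat_diag n (\<lambda>i. complex_of_real (cmod (d i))) * X = mat_adjoint ?B * ?B"
    using mat_adjoint_diag_congruence[OF assms(1), of s "\<lambda>_. 1"] factor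
      right_mult_one_mat[OF mat_adjoint_carrier[OF B]]
    by simp
  have "mat_adjoint (mat_diag n u) * mat_diag n u = 1\<^sub>m n" using factor by simp
  from prod_sigma_adjoint_unitary_le[OF B mat_diag_dim this assms(3)]
  show ?thesis unfolding D abs_D .
qed

end
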